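(* Let $\mathcal{P}$ be a unital partition of the cyclic group $G=\mu_m$ and let $d,d'$ be divisors of $m$. Then $\mathcal{P}_d\cap\mathcal{P}_{d'}\neq\emptyset$ if and only if $\mathcal{P}_d=\mathcal{P}_{d'}$.
   Context: A unital partition of a finite commutative group $G$ is a partition $G=\{1\}\sqcup A_0\sqcup\dots\sqcup A_s$ such that, with $a_i=\sum_{x\in A_i}x\in\mathbb{Z}[G]$, the $\mathbb{Z}$-span of $1$ and the $a_i$ is closed under multiplication in $\mathbb{Z}[G]$. For $d\mid m$, $\mathcal{P}_d$ is the set of members of $\mathcal{P}$ containing an element of order exactly $d$. *)

theory Defs
  imports Main "HOL-Library.Disjoint_Sets"
begin

text \<open>The cyclic group mu_m is modelled (additively) as Z/mZ with carrier {0..<m},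
  identity 0 and operation (a + b) mod m.  Elements of the group ring Z[G] are
  functions nat => int (supported on {0..<m}); the element x of G corresponds to
  the indicator of {x}.\<close>

definition cyc_order :: "nat \<Rightarrow> nat \<Rightarrow> nat" where
  "cyc_order m x = (LEAST n. 0 < n \<and> (n * x) mod m = 0)"

definition grp_ring_mult :: "nat \<Rightarrow> (nat \<Rightarrow> int) \<Rightarrow> (nat \<Rightarrow> int) \<Rightarrow> nat \<Rightarrow> int" where
  "grp_ring_mult m f g x =
     (\<Sum>a<m. \<Sum>b<m. if (a + b) mod m = x then f a * g b else 0)"

definition block_span :: "nat set set \<Rightarrow> (nat \<Rightarrow> int) set" where
  "block_span P = {f. \<exists>c :: nat set \<Rightarrow> int. f = (\<lambda>x. \<Sum>B\<in>P. c B * (if x \<in> B then 1 else 0))}"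

definition unital_partition :: "nat \<Rightarrow> nat set set \<Rightarrow> bool" where
  "unital_partition m P \<longleftrightarrow>
     partition_on {0..<m} P \<and> {0} \<in> P \<and>
     (\<forall>f\<in>block_span P. \<forall>g\<in>block_span P. grp_ring_mult m f g \<in> block_span P)"

definition blocks_of_order :: "nat \<Rightarrow> nat set set \<Rightarrow> nat \<Rightarrow> nat set set" where
  "blocks_of_order m P d = {B \<in> P. \<exists>x\<in>B. cyc_order m x = d}"

end

theory Submission
  imports Defs "HOL-Computational_Algebra.Polynomial" "HOL-Computational_Algebra.Primes"
    "HOL-Number_Theory.Cong"
begin

(*
  The key input is Schur's multiplier theorem: for every unit k of Z/mZ and every
  block B of P, the dilated set kB is a union of blocks.  For a prime multiplier p
  this follows by comparing, in the group ring, the p-th power of the block sum a_B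
  with the sum over pB: by the freshman's dream they agree modulo p, and powers of
  a_B stay in the span of the block sums, hence are constant on blocks.  The group
  ring is reached from int polynomials through the ring homomorphism reducing
  exponents mod m.  General units are products of primes coprime to m.

  Elements of Z/mZ of equal order are related by a unit, and units preserve orders.
  So if a block B contains elements x, y of orders d, d' and a block C contains z of
  order d, pick a unit k with kz = x: then kC meets B, hence contains y, and the
  preimage of y in C has order d'.  The converse direction only needs that every
  divisor of m occurs as an order.
*)

section \<open>Orders and units in \<open>\<int>/m\<int>\<close>\<close>

lemma cyc_order_eq:
  fixes m x :: nat
  assumes m: "0 < m"
  shows "cyc_order m x = m div gcd x m"
proof -
  define g where "g = gcd x m"
  have g0: "g > 0" using m g_def by simp
  obtain m' where m': "m = g * m'" using g_def by (metis gcd_dvd2 dvdE)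
  obtain x' where x': "x = g * x'" using g_def by (metis gcd_dvd1 dvdE)
  have cop: "coprime x' m'"
    using div_gcd_coprime[of x m] m unfolding g_def[symmetric] using m' x' g0 by simp
  have kills: "(n * x) mod m = 0 \<longleftrightarrow> m' dvd n" for n
  proof -
    have "(n * x) mod m = 0 \<longleftrightarrow> g * m' dvd g * (n * x')"
      using m' x' by (simp add: ac_simps dvd_eq_mod_eq_0[symmetric])
    also have "\<dots> \<longleftrightarrow> m' dvd n * x'" using g0 by simp
    also have "\<dots> \<longleftrightarrow> m' dvd n" using cop by (simp add: coprime_dvd_mult_left_iff coprime_commute)
    finally show ?thesis .
  qed
  have "cyc_order m x = m'"
    unfolding cyc_order_def
  proof (rule Least_equality)
    have "0 < m'" using m m' by simp
    then show "0 < m' \<and> m' * x mod m = 0" using kills[of m'] by simp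
  qed (use kills in \<open>auto dest: dvd_imp_le\<close>)
  moreover have "m div g = m'" using m' g0 by simp
  ultimately show ?thesis by (simp add: g_def)
qed

lemma cyc_order_mult_unit:
  assumes m: "0 < m" and k: "coprime k m"
  shows "cyc_order m (k * w mod m) = cyc_order m w"
proof -
  have "gcd (k * w mod m) m = gcd w m"
    using m k by (simp add: gcd_mod_left gcd_mult_left_left_cancel coprime_commute)
  then show ?thesis by (simp add: cyc_order_eq[OF m])
qed

lemma cyc_order_divisor:
  assumes m: "0 < m" and d: "d dvd m"
  shows "cyc_order m (m div d mod m) = d"
proof -
  obtain q where q: "m = d * q" using d by (auto elim: dvdE)
  then have "q > 0" "d > 0" using m by auto
  then have "m div d = q" "gcd (q mod m) m = q" "m div q = d" using q m by (simp_all add: gcd_mod_left)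
  then show ?thesis by (simp add: cyc_order_eq[OF m])
qed

lemma coprime_by_primes:
  fixes a b :: nat
  assumes "\<And>p. prime p \<Longrightarrow> p dvd a \<Longrightarrow> p dvd b \<Longrightarrow> False"
  shows "coprime a b"
proof (rule coprimeI)
  fix c assume c: "c dvd a" "c dvd b"
  show "is_unit c"
  proof (rule ccontr)
    assume "\<not> is_unit c"
    then obtain p where "prime p" "p dvd c" using prime_factor_nat by auto
    then show False using assms c by (meson dvd_trans)
  qed
qed

text \<open>Every unit \<open>k0\<close> modulo \<open>d\<close> has a representative that is a unit modulo \<open>m\<close>:
  add to it \<open>d\<close> times the product of the primes of \<open>m\<close> that do not divide \<open>k0\<close>.\<close>

lemma unit_lift:
  fixes d m k0 :: nat
  assumes m: "0 < m" and k0: "coprime k0 d"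
  shows "\<exists>k. [k = k0] (mod d) \<and> coprime k m"
proof -
  define S where "S = {p. prime p \<and> p dvd m \<and> \<not> p dvd k0}"
  have finS: "finite S" unfolding S_def using m
    by (rule_tac finite_subset[of _ "{..m}"]) (auto dest: dvd_imp_le)
  define t where "t = \<Prod>S"
  have prime_dvd_t: "p dvd t \<longleftrightarrow> p \<in> S" if p: "prime p" for p
  proof
    assume "p dvd t"
    then obtain q where "q \<in> S" "p dvd q"
      unfolding t_def using prime_dvd_prod_iff[OF finS p, of id] by auto
    moreover from this have "p = q" using p by (simp add: S_def primes_dvd_imp_eq)
    ultimately show "p \<in> S" by simp
  next
    assume "p \<in> S"
    then show "p dvd t" unfolding t_def using dvd_prodI[OF finS, of p "\<lambda>x. x"] by simp
  qed
  define k where "k = k0 + d * t"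
  have "coprime k m"
  proof (rule coprime_by_primes)
    fix p assume p: "prime p" "p dvd k" "p dvd m"
    show False
    proof (cases "p dvd k0")
      case True
      then have "\<not> p dvd d" using k0 p(1) by (metis coprime_common_divisor_nat not_prime_1)
      then have "p dvd t" using True p by (simp add: k_def dvd_add_right_iff prime_dvd_mult_iff)
      then show False using True prime_dvd_t[OF p(1)] by (simp add: S_def)
    next
      case False
      then have "p dvd t" using p prime_dvd_t[OF p(1)] by (simp add: S_def)
      then show False using False p(2) by (simp add: k_def dvd_add_left_iff)
    qed
  qed
  moreover have "[k = k0] (mod d)" by (simp add: k_def cong_def)
  ultimately show ?thesis by blast
qed

text \<open>Elements of \<open>\<int>/m\<int>\<close> of the same order are related by a unit: writing
  \<open>x = g x'\<close>, \<open>z = g z'\<close>, \<open>m = g d\<close> with \<open>x', z'\<close> units mod \<open>d\<close>, lift \<open>x' / z'\<close>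
  to a unit mod \<open>m\<close>.\<close>

lemma same_order_unit:
  fixes m x z :: nat
  assumes m: "0 < m" and x: "x < m" and z: "z < m"
    and same_order: "cyc_order m x = cyc_order m z"
  shows "\<exists>k. coprime k m \<and> k * z mod m = x"
proof -
  define g where "g = gcd x m"
  define d where "d = m div g"
  have g0: "g > 0" using m g_def by simp
  have md: "m = g * d" using g_def d_def by simp
  have "m div gcd z m = d" using same_order by (simp add: cyc_order_eq[OF m] d_def g_def)
  then have "gcd z m * d = g * d" using md by (metis dvd_mult_div_cancel gcd_dvd2)
  moreover have "d > 0" using md m by simp
  ultimately have gz: "gcd z m = g" by simp
  obtain x' where x': "x = g * x'" using g_def by (metis gcd_dvd1 dvdE)
  obtain z' where z': "z = g * z'" using gz by (metis gcd_dvd1 dvdE)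
  have x'_unit: "coprime x' d"
    using div_gcd_coprime[of x m] m unfolding g_def[symmetric] using md x' g0 by simp
  have "coprime z' d"
    using div_gcd_coprime[of z m] m unfolding gz using md z' g0 by simp
  then obtain u where u: "[z' * u = 1] (mod d)" using cong_solve_coprime_nat by auto
  then have "coprime u d" using coprime_iff_invertible_nat[of u d] by (auto simp: mult.commute)
  then have "coprime (u * x') d" using x'_unit by simp
  then obtain k where k: "[k = u * x'] (mod d)" "coprime k m"
    using unit_lift[OF m] by blast
  have "[k * z' = u * x' * z'] (mod d)" using k(1) by (rule cong_scalar_right)
  also have "[u * x' * z' = x' * (z' * u)] (mod d)" by (simp add: ac_simps)
  also have "[x' * (z' * u) = x' * 1] (mod d)" using u by (rule cong_scalar_left)
  finally have "k * z' mod d = x' mod d" by (simp add: cong_def)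
  then have "k * z mod m = x mod m" using x' z' md by (simp add: ac_simps mod_mult_mult1)
  then show ?thesis using k x by auto
qed

definition mult_set :: "nat \<Rightarrow> nat \<Rightarrow> nat set \<Rightarrow> nat set" where
  "mult_set m k S = (\<lambda>x. k * x mod m) ` S"

lemma mult_set_mult: "mult_set m (p * k) S = mult_set m p (mult_set m k S)"
proof -
  have "p * k * x mod m = p * (k * x mod m) mod m" for x
    by (simp add: mod_mult_right_eq mult.assoc)
  then show ?thesis unfolding mult_set_def by (auto simp: image_image)
qed

lemma mult_set_one: "S \<subseteq> {..<m} \<Longrightarrow> mult_set m 1 S = S"
  unfolding mult_set_def by (force simp: subset_iff)

lemma mult_set_range: "0 < m \<Longrightarrow> mult_set m k S \<subseteq> {..<m}"
  unfolding mult_set_def by auto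

lemma inj_on_unit_mult:
  fixes k m :: nat
  assumes "coprime k m"
  shows "inj_on (\<lambda>x. k * x mod m) {..<m}"
proof (rule inj_onI)
  fix x x' :: nat assume "x \<in> {..<m}" "x' \<in> {..<m}" "k * x mod m = k * x' mod m"
  then have "[x * k = x' * k] (mod m)" "x < m" "x' < m" by (simp_all add: cong_def mult.commute)
  then show "x = x'" using cong_mult_rcancel_nat[OF assms] by (simp add: cong_def)
qed

section \<open>The freshman's dream modulo a prime\<close>

text \<open>In any commutative ring, the \<open>p\<close>-th power of a sum agrees with the sum of the
  \<open>p\<close>-th powers up to a multiple of the prime \<open>p\<close>, since \<open>p\<close> divides the inner
  binomial coefficients.\<close>

lemma freshmans_dream_dvd:
  fixes a b :: "'a::comm_ring_1"
  assumes p: "prime p"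
  shows "of_nat p dvd (a + b) ^ p - a ^ p - b ^ p"
proof -
  have p0: "p > 0" using p prime_gt_0_nat by blast
  have "(a + b) ^ p = (\<Sum>k\<le>p. of_nat (p choose k) * a ^ k * b ^ (p - k))"
    by (rule binomial_ring)
  also have "\<dots> = (\<Sum>k\<in>{0, p} \<union> {1..<p}. of_nat (p choose k) * a ^ k * b ^ (p - k))"
    using p0 by (intro sum.cong) auto
  also have "\<dots> = a ^ p + b ^ p + (\<Sum>k\<in>{1..<p}. of_nat (p choose k) * a ^ k * b ^ (p - k))"
    using p0 by (subst sum.union_disjoint) auto
  finally have expand: "(a + b) ^ p - a ^ p - b ^ p
      = (\<Sum>k\<in>{1..<p}. of_nat (p choose k) * a ^ k * b ^ (p - k))"
    by simp
  have "of_nat p dvd (of_nat (p choose k) :: 'a)" if "k \<in> {1..<p}" for k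
    using dvd_choose_prime[of k p] that p by (auto elim!: dvdE simp: dvd_def)
  then show ?thesis
    unfolding expand by (intro dvd_sum) (simp add: mult.assoc)
qed

lemma freshmans_dream_sum_dvd:
  fixes f :: "'b \<Rightarrow> 'a::comm_ring_1"
  assumes p: "prime p" and "finite S"
  shows "of_nat p dvd (\<Sum>x\<in>S. f x) ^ p - (\<Sum>x\<in>S. f x ^ p)"
  using assms(2)
proof (induction S rule: finite_induct)
  case empty
  then show ?case using p by (simp add: prime_gt_0_nat power_0_left)
next
  case (insert x S)
  have "(\<Sum>y\<in>insert x S. f y) ^ p - (\<Sum>y\<in>insert x S. f y ^ p)
      = ((f x + sum f S) ^ p - f x ^ p - sum f S ^ p) + (sum f S ^ p - (\<Sum>y\<in>S. f y ^ p))"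
    using insert.hyps by simp
  then show ?case
    using freshmans_dream_dvd[OF p] insert.IH by (metis dvd_add)
qed

section \<open>Integer polynomials and the group ring\<close>

text \<open>Reducing exponents modulo \<open>m\<close> maps \<open>\<int>[X]\<close> onto the group ring \<open>\<int>[\<int>/m\<int>]\<close>
  (this is the quotient by \<open>X^m - 1\<close>); it is additive and multiplicative, which lets us
  compute powers in the group ring with ordinary polynomial algebra.\<close>

definition poly_to_grp_ring :: "nat \<Rightarrow> int poly \<Rightarrow> nat \<Rightarrow> int" where
  "poly_to_grp_ring m q y = (\<Sum>i\<le>degree q. if i mod m = y then coeff q i else 0)"

lemma poly_to_grp_ring_upto:
  assumes "degree q \<le> n"
  shows "poly_to_grp_ring m q y = (\<Sum>i\<le>n. if i mod m = y then coeff q i else 0)"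
  unfolding poly_to_grp_ring_def
  by (rule sum.mono_neutral_left) (use assms in \<open>auto simp: coeff_eq_0\<close>)

lemma poly_to_grp_ring_add:
  "poly_to_grp_ring m (q + r) y = poly_to_grp_ring m q y + poly_to_grp_ring m r y"
proof -
  let ?n = "max (degree q) (degree r)"
  have "degree (q + r) \<le> ?n" by (rule degree_add_le) auto
  then show ?thesis
    by (simp add: poly_to_grp_ring_upto[where n = ?n] sum.distrib[symmetric] if_distrib
        cong: if_cong)
qed

lemma poly_to_grp_ring_sum:
  "finite S \<Longrightarrow> poly_to_grp_ring m (\<Sum>i\<in>S. f i) y = (\<Sum>i\<in>S. poly_to_grp_ring m (f i) y)"
proof (induction S rule: finite_induct)
  case empty
  have "poly_to_grp_ring m 0 y = 0" unfolding poly_to_grp_ring_def by (auto intro!: sum.neutral)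
  then show ?case by simp
qed (simp add: poly_to_grp_ring_add)

lemma poly_to_grp_ring_monom:
  "poly_to_grp_ring m (monom a i) y = (if i mod m = y then a else 0)"
proof -
  have "poly_to_grp_ring m (monom a i) y = (\<Sum>k\<le>i. if k mod m = y then coeff (monom a i) k else 0)"
    by (rule poly_to_grp_ring_upto[OF degree_monom_le])
  also have "\<dots> = (\<Sum>k\<le>i. if k = i then (if i mod m = y then a else 0) else 0)"
    by (rule sum.cong) (auto simp: coeff_monom)
  finally show ?thesis by (simp add: sum.delta')
qed

lemma poly_to_grp_ring_of_nat_mult:
  "poly_to_grp_ring m (of_nat p * q) y = int p * poly_to_grp_ring m q y"
proof -
  have "of_nat p * q = smult (int p) q" by (simp add: of_nat_poly)
  then show ?thesis
    by (simp add: poly_to_grp_ring_upto[where n = "degree q"] degree_smult_le sum_distrib_left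
        if_distrib cong: if_cong)
qed

lemma poly_to_grp_ring_one: "poly_to_grp_ring m 1 = (\<lambda>y. if y = 0 then 1 else 0)"
  using poly_to_grp_ring_monom[of m 1 0] by (auto simp: monom_eq_1 intro!: ext)

lemma grp_ring_mult_sum:
  assumes "finite I" "finite J"
  shows "grp_ring_mult m (\<lambda>y. \<Sum>i\<in>I. f i y) (\<lambda>y. \<Sum>j\<in>J. g j y) x
       = (\<Sum>i\<in>I. \<Sum>j\<in>J. grp_ring_mult m (f i) (g j) x)"
proof -
  have "grp_ring_mult m (\<lambda>y. \<Sum>i\<in>I. f i y) (\<lambda>y. \<Sum>j\<in>J. g j y) x
      = (\<Sum>a<m. \<Sum>b<m. \<Sum>i\<in>I. \<Sum>j\<in>J. if (a + b) mod m = x then f i a * g j b else 0)"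
    unfolding grp_ring_mult_def by (intro sum.cong refl) (auto simp: sum_product)
  also have "\<dots> = (\<Sum>a<m. \<Sum>i\<in>I. \<Sum>b<m. \<Sum>j\<in>J. if (a + b) mod m = x then f i a * g j b else 0)"
    by (intro sum.cong refl sum.swap)
  also have "\<dots> = (\<Sum>i\<in>I. \<Sum>a<m. \<Sum>j\<in>J. \<Sum>b<m. if (a + b) mod m = x then f i a * g j b else 0)"
    by (subst sum.swap) (intro sum.cong refl sum.swap)
  also have "\<dots> = (\<Sum>i\<in>I. \<Sum>j\<in>J. \<Sum>a<m. \<Sum>b<m. if (a + b) mod m = x then f i a * g j b else 0)"
    by (intro sum.cong refl sum.swap)
  finally show ?thesis unfolding grp_ring_mult_def .
qed

lemma grp_ring_mult_delta:
  assumes "0 < m"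
  shows "grp_ring_mult m (\<lambda>y. if i mod m = y then a else 0) (\<lambda>y. if j mod m = y then b else 0) x
       = (if (i + j) mod m = x then a * b else 0)"
proof -
  let ?f = "\<lambda>y. if i mod m = y then a else (0::int)"
  have inner: "(\<Sum>b'<m. if (a' + b') mod m = x then ?f a' * (if j mod m = b' then b else 0) else 0)
      = (if (a' + j mod m) mod m = x then ?f a' * b else 0)" for a'
  proof -
    have "(\<Sum>b'<m. if (a' + b') mod m = x then ?f a' * (if j mod m = b' then b else 0) else 0)
        = (\<Sum>b'<m. if b' = j mod m then (if (a' + j mod m) mod m = x then ?f a' * b else 0) else 0)"
      by (rule sum.cong) auto
    then show ?thesis using assms by (simp add: sum.delta)
  qed
  have "grp_ring_mult m ?f (\<lambda>y. if j mod m = y then b else 0) x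
      = (\<Sum>a'<m. if (a' + j mod m) mod m = x then ?f a' * b else 0)"
    unfolding grp_ring_mult_def using inner by simp
  also have "\<dots> = (\<Sum>a'<m. if a' = i mod m then (if (i mod m + j mod m) mod m = x then a * b else 0) else 0)"
    by (rule sum.cong) auto
  also have "\<dots> = (if (i mod m + j mod m) mod m = x then a * b else 0)"
    using assms by (simp add: sum.delta)
  finally show ?thesis by (simp add: mod_add_eq)
qed

lemma poly_to_grp_ring_mult:
  assumes "0 < m"
  shows "poly_to_grp_ring m (q * r) x = grp_ring_mult m (poly_to_grp_ring m q) (poly_to_grp_ring m r) x"
proof -
  have "q * r = (\<Sum>i\<le>degree q. monom (coeff q i) i) * (\<Sum>j\<le>degree r. monom (coeff r j) j)"
    by (simp add: poly_as_sum_of_monoms)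
  also have "\<dots> = (\<Sum>i\<le>degree q. \<Sum>j\<le>degree r. monom (coeff q i * coeff r j) (i + j))"
    by (simp add: sum_product mult_monom)
  finally have "poly_to_grp_ring m (q * r) x
      = (\<Sum>i\<le>degree q. \<Sum>j\<le>degree r. if (i + j) mod m = x then coeff q i * coeff r j else 0)"
    by (simp add: poly_to_grp_ring_sum poly_to_grp_ring_monom)
  also have "\<dots> = (\<Sum>i\<le>degree q. \<Sum>j\<le>degree r. grp_ring_mult m
      (\<lambda>y. if i mod m = y then coeff q i else 0) (\<lambda>y. if j mod m = y then coeff r j else 0) x)"
    by (simp add: grp_ring_mult_delta[OF assms])
  also have "\<dots> = grp_ring_mult m (poly_to_grp_ring m q) (poly_to_grp_ring m r) x"
    by (simp add: grp_ring_mult_sum poly_to_grp_ring_def[abs_def])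
  finally show ?thesis .
qed

section \<open>Unital partitions\<close>

text \<open>A set is saturated for \<open>P\<close> if it contains every block it meets; for subsets of the
  group this means it is a union of blocks.\<close>

definition saturated :: "nat set set \<Rightarrow> nat set \<Rightarrow> bool" where
  "saturated P S \<longleftrightarrow> (\<forall>C\<in>P. C \<inter> S \<noteq> {} \<longrightarrow> C \<subseteq> S)"

lemma unital_partition_block_range:
  "unital_partition m P \<Longrightarrow> B \<in> P \<Longrightarrow> B \<subseteq> {..<m}"
  unfolding unital_partition_def partition_on_def by auto

lemma unital_partition_cover:
  "unital_partition m P \<Longrightarrow> z < m \<Longrightarrow> \<exists>D\<in>P. z \<in> D"
  unfolding unital_partition_def partition_on_def by auto

lemma unital_partition_block_eq:
  assumes "unital_partition m P" "B \<in> P" "C \<in> P" "y \<in> B" "y \<in> C"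
  shows "B = C"
  using assms disjointD[of P B C] unfolding unital_partition_def partition_on_def by blast

lemma unital_partition_finite: "unital_partition m P \<Longrightarrow> finite P"
  unfolding unital_partition_def partition_on_def by (metis finite_UnionD finite_atLeastLessThan)

lemma block_saturated: "unital_partition m P \<Longrightarrow> B \<in> P \<Longrightarrow> saturated P B"
  unfolding saturated_def using unital_partition_block_eq by blast

lemma indicator_in_block_span:
  assumes up: "unital_partition m P" and B: "B \<in> P"
  shows "(\<lambda>x. if x \<in> B then 1 else 0) \<in> block_span P"
proof -
  have "(\<Sum>B'\<in>P. (if B' = B then 1 else 0) * (if x \<in> B' then 1 else 0))
      = (if x \<in> B then 1 else (0::int))" for x
  proof -
    have "(\<Sum>B'\<in>P. (if B' = B then 1 else 0) * (if x \<in> B' then 1 else 0))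
        = (\<Sum>B'\<in>P. if B' = B then (if x \<in> B then 1 else 0) else (0::int))"
      by (rule sum.cong) auto
    then show ?thesis using unital_partition_finite[OF up] B by simp
  qed
  then show ?thesis
    unfolding block_span_def by (intro CollectI exI[of _ "\<lambda>B'. if B' = B then 1 else 0"]) auto
qed

lemma block_span_const:
  assumes up: "unital_partition m P" and f: "f \<in> block_span P" and C: "C \<in> P"
    and "y \<in> C" "y' \<in> C"
  shows "f y = f y'"
proof -
  obtain c where c: "f = (\<lambda>x. \<Sum>B\<in>P. c B * (if x \<in> B then 1 else 0))"
    using f unfolding block_span_def by blast
  have "f z = c C" if "z \<in> C" for z
  proof -
    have "f z = (\<Sum>B\<in>P. if B = C then c C else 0)"
      unfolding c by (rule sum.cong) (use that unital_partition_block_eq[OF up _ C] in auto)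
    then show ?thesis using unital_partition_finite[OF up] C by simp
  qed
  then show ?thesis using assms by simp
qed

text \<open>The span is a subring containing the identity, so it is closed under powers.\<close>

lemma power_in_block_span:
  assumes up: "unital_partition m P" and m: "0 < m"
    and A: "poly_to_grp_ring m A \<in> block_span P"
  shows "poly_to_grp_ring m (A ^ n) \<in> block_span P"
proof (induction n)
  case 0
  have "(\<lambda>x. if x \<in> {0} then 1 else 0) \<in> block_span P"
    using up by (intro indicator_in_block_span) (auto simp: unital_partition_def)
  then show ?case by (simp add: poly_to_grp_ring_one)
next
  case (Suc n)
  then show ?case
    using up A
    by (simp add: poly_to_grp_ring_mult[OF m] unital_partition_def[of m P] fun_eq_iff[symmetric])
qed

section \<open>Schur's multiplier theorem\<close>

lemma poly_to_grp_ring_dilate: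
  fixes k m :: nat
  assumes k: "coprime k m" and S: "S \<subseteq> {..<m}"
  shows "poly_to_grp_ring m (\<Sum>x\<in>S. monom 1 (k * x)) y = (if y \<in> mult_set m k S then 1 else 0)"
proof -
  have fin: "finite S" using S finite_subset by blast
  have inj: "inj_on (\<lambda>x. k * x mod m) S" using inj_on_subset[OF inj_on_unit_mult[OF k] S] .
  have "poly_to_grp_ring m (\<Sum>x\<in>S. monom 1 (k * x)) y = (\<Sum>x\<in>S. if k * x mod m = y then 1 else 0)"
    by (simp add: poly_to_grp_ring_sum[OF fin] poly_to_grp_ring_monom)
  also have "\<dots> = (\<Sum>z\<in>mult_set m k S. if z = y then 1 else 0)"
    unfolding mult_set_def using sum.reindex[OF inj, of "\<lambda>z. if z = y then 1 else (0::int)"] by simp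
  also have "\<dots> = (if y \<in> mult_set m k S then 1 else 0)"
    using fin by (simp add: mult_set_def)
  finally show ?thesis .
qed

text \<open>Schur's theorem for a prime multiplier \<open>p\<close> coprime to \<open>m\<close>: with \<open>A = \<Sum>x\<in>B. X^x\<close>,
  the image of \<open>A^p\<close> lies in the span, so is constant on blocks; but it equals the
  indicator of \<open>pB\<close> plus \<open>p\<close> times an integer function, so it takes the value \<open>1\<close> mod \<open>p\<close>
  exactly on \<open>pB\<close>.  Hence any block meeting \<open>pB\<close> lies in \<open>pB\<close>.\<close>

theorem prime_multiplier_saturated:
  assumes up: "unital_partition m P" and m: "0 < m"
    and p: "prime p" "coprime p m" and B: "B \<in> P"
  shows "saturated P (mult_set m p B)"
  unfolding saturated_def
proof (intro ballI impI subsetI)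
  fix C y' assume C: "C \<in> P" and "C \<inter> mult_set m p B \<noteq> {}" and y': "y' \<in> C"
  then obtain y where y: "y \<in> C" "y \<in> mult_set m p B" by blast
  have Bm: "B \<subseteq> {..<m}" using unital_partition_block_range[OF up B] .
  define A where "A = (\<Sum>x\<in>B. monom (1::int) x)"
  have "poly_to_grp_ring m A = (\<lambda>z. if z \<in> B then 1 else 0)"
    using poly_to_grp_ring_dilate[of 1 m B] Bm mult_set_one[OF Bm] by (simp add: A_def fun_eq_iff)
  then have "poly_to_grp_ring m (A ^ p) \<in> block_span P"
    using power_in_block_span[OF up m] indicator_in_block_span[OF up B] by simp
  then have same: "poly_to_grp_ring m (A ^ p) y = poly_to_grp_ring m (A ^ p) y'"
    using block_span_const[OF up _ C y(1) y'] by blast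
  have "finite B" using Bm finite_subset by blast
  then have "of_nat p dvd A ^ p - (\<Sum>x\<in>B. monom 1 (p * x))"
    using freshmans_dream_sum_dvd[OF p(1), of B "\<lambda>x. monom (1::int) x"]
    unfolding A_def by (simp add: monom_power mult.commute)
  then obtain c where c: "A ^ p - (\<Sum>x\<in>B. monom 1 (p * x)) = of_nat p * c" by (rule dvdE)
  have expand: "poly_to_grp_ring m (A ^ p) z
      = (if z \<in> mult_set m p B then 1 else 0) + int p * poly_to_grp_ring m c z" for z
  proof -
    have "A ^ p = (\<Sum>x\<in>B. monom 1 (p * x)) + of_nat p * c" using c by (simp add: algebra_simps)
    then show ?thesis
      by (simp add: poly_to_grp_ring_add poly_to_grp_ring_of_nat_mult
          poly_to_grp_ring_dilate[OF p(2) Bm])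
  qed
  show "y' \<in> mult_set m p B"
  proof (rule ccontr)
    assume "y' \<notin> mult_set m p B"
    then have "1 = int p * (poly_to_grp_ring m c y' - poly_to_grp_ring m c y)"
      using same expand[of y] expand[of y'] y(2) by (simp add: algebra_simps)
    then have "int p dvd 1" by (metis dvd_triv_left)
    then show False using p(1) by (simp add: prime_gt_1_nat)
  qed
qed

lemma saturated_mult_set:
  assumes up: "unital_partition m P" and S: "saturated P S" "S \<subseteq> {..<m}"
    and blocks: "\<And>D. D \<in> P \<Longrightarrow> saturated P (mult_set m k D)"
  shows "saturated P (mult_set m k S)"
  unfolding saturated_def
proof (intro ballI impI)
  fix C assume C: "C \<in> P" "C \<inter> mult_set m k S \<noteq> {}"
  then obtain s where s: "s \<in> S" "k * s mod m \<in> C" unfolding mult_set_def by blast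
  obtain D where D: "D \<in> P" "s \<in> D" using unital_partition_cover[OF up] s(1) S(2) by blast
  have "D \<subseteq> S" using S(1) D s(1) unfolding saturated_def by blast
  moreover have "C \<subseteq> mult_set m k D"
    using blocks[OF D(1)] C(1) D(2) s(2) unfolding saturated_def mult_set_def by blast
  ultimately show "C \<subseteq> mult_set m k S" unfolding mult_set_def by blast
qed

lemma unit_multiplier_saturated:
  assumes up: "unital_partition m P" and m: "0 < m" and k: "coprime k m" and B: "B \<in> P"
  shows "saturated P (mult_set m k B)"
  using k B
proof (induction k arbitrary: B rule: prime_divisors_induct)
  case zero
  have "B \<noteq> {}" using up zero.prems(2) unfolding unital_partition_def partition_on_def by blast
  then have "mult_set m 0 B = {0}" unfolding mult_set_def by auto
  then show ?case using block_saturated[OF up] up unfolding unital_partition_def by simp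
next
  case (unit k)
  then show ?case
    using block_saturated[OF up] mult_set_one[OF unital_partition_block_range[OF up]] by simp
next
  case (factor p k)
  then have "coprime p m" "coprime k m" by simp_all
  then show ?case
    using factor.prems(2) factor.IH prime_multiplier_saturated[OF up m factor.hyps]
      saturated_mult_set[OF up] mult_set_range[OF m]
    by (simp add: mult_set_mult)
qed

section \<open>Blocks containing elements of a given order\<close>

lemma blocks_of_order_subset:
  assumes up: "unital_partition m P" and m: "0 < m"
    and common: "blocks_of_order m P d \<inter> blocks_of_order m P d' \<noteq> {}"
  shows "blocks_of_order m P d \<subseteq> blocks_of_order m P d'"
proof
  obtain B x y where B: "B \<in> P"
    and x: "x \<in> B" "cyc_order m x = d" and y: "y \<in> B" "cyc_order m y = d'"
    using common unfolding blocks_of_order_def by blast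
  fix C assume "C \<in> blocks_of_order m P d"
  then obtain z where C: "C \<in> P" and z: "z \<in> C" "cyc_order m z = d"
    unfolding blocks_of_order_def by blast
  obtain k where k: "coprime k m" "k * z mod m = x"
    using same_order_unit[OF m, of x z] unital_partition_block_range[OF up] B x C z by auto
  have "B \<inter> mult_set m k C \<noteq> {}" using x(1) z(1) k(2) unfolding mult_set_def by blast
  then have "y \<in> mult_set m k C"
    using unit_multiplier_saturated[OF up m k(1) C] B y(1) unfolding saturated_def by blast
  then obtain w where "w \<in> C" "y = k * w mod m" unfolding mult_set_def by blast
  then show "C \<in> blocks_of_order m P d'"
    using C cyc_order_mult_unit[OF m k(1), of w] y(2) unfolding blocks_of_order_def by auto
qed

lemma blocks_of_order_nonempty:
  assumes up: "unital_partition m P" and m: "0 < m" and d: "d dvd m"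
  shows "blocks_of_order m P d \<noteq> {}"
proof -
  obtain D where "D \<in> P" "m div d mod m \<in> D"
    using unital_partition_cover[OF up, of "m div d mod m"] m by auto
  then show ?thesis using cyc_order_divisor[OF m d] unfolding blocks_of_order_def by blast
qed

theorem corollary3p4:
  fixes m d d' :: nat and P :: "nat set set"
  assumes "0 < m"
    and "unital_partition m P"
    and "d dvd m" and "d' dvd m"
  shows "blocks_of_order m P d \<inter> blocks_of_order m P d' \<noteq> {} \<longleftrightarrow>
         blocks_of_order m P d = blocks_of_order m P d'"
proof
  assume "blocks_of_order m P d \<inter> blocks_of_order m P d' \<noteq> {}"
  then show "blocks_of_order m P d = blocks_of_order m P d'"
    using blocks_of_order_subset[OF assms(2,1)] by (metis Int_commute subset_antisym)
next
  assume "blocks_of_order m P d = blocks_of_order m P d'"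
  then show "blocks_of_order m P d \<inter> blocks_of_order m P d' \<noteq> {}"
    using blocks_of_order_nonempty[OF assms(2,1,3)] by simp
qed

end
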